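(* Let $u\in C^4(\mathbb{R}^3)$ be a $2$-convex solution of $\sigma_2(D^2u)=1$ in $\mathbb{R}^3$. Then at every point, $$\sum_{i,j=1}^3\sigma_2^{ij}\,(\log\Delta u)_{ij}\ \ge\ \frac{1}{25}\sum_{i,j=1}^3\sigma_2^{ij}\,(\log\Delta u)_i\,(\log\Delta u)_j.$$
   Context: $\sigma_2(D^2u)$ is the second elementary symmetric function of the eigenvalues of $D^2u$, and $\sigma_2^{ij}=\partial\sigma_2/\partial u_{ij}$ evaluated at $D^2u$ (so $\sigma_2^{ij}=\Delta u\,\delta_{ij}-u_{ij}$). A function is $2$-convex if the eigenvalues $\lambda$ of its Hessian satisfy $\sigma_1(\lambda)>0$, $\sigma_2(\lambda)>0$ at every point; in particular $\Delta u=\sigma_1(D^2u)>0$. Subscripts denote partial derivatives. *)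

theory Defs
  imports "HOL-Analysis.Analysis"
begin

definition pd :: "3 \<Rightarrow> (real^3 \<Rightarrow> real) \<Rightarrow> real^3 \<Rightarrow> real" where
  "pd i f x = deriv (\<lambda>t. f (x + t *\<^sub>R axis i 1)) 0"

definition has_pd_everywhere :: "3 \<Rightarrow> (real^3 \<Rightarrow> real) \<Rightarrow> bool" where
  "has_pd_everywhere i f \<longleftrightarrow>
     (\<forall>x. (\<lambda>t. f (x + t *\<^sub>R axis i 1)) differentiable (at 0))"

fun Ck :: "nat \<Rightarrow> (real^3 \<Rightarrow> real) \<Rightarrow> bool" where
  "Ck 0 f \<longleftrightarrow> continuous_on UNIV f"
| "Ck (Suc k) f \<longleftrightarrow> continuous_on UNIV f \<and>
      (\<forall>i. has_pd_everywhere i f \<and> Ck k (pd i f))"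

definition hess :: "(real^3 \<Rightarrow> real) \<Rightarrow> real^3 \<Rightarrow> real^3^3" where
  "hess u x = (\<chi> i j. pd i (pd j u) x)"

(* sigma_1 and sigma_2 of a (symmetric) 3x3 matrix: elementary symmetric functions
   of its eigenvalues, written as trace and sum of principal 2x2 minors *)
definition sigma1 :: "real^3^3 \<Rightarrow> real" where
  "sigma1 A = (\<Sum>i\<in>UNIV. A $ i $ i)"

definition sigma2 :: "real^3^3 \<Rightarrow> real" where
  "sigma2 A = (\<Sum>i\<in>UNIV. \<Sum>j\<in>UNIV. if i < j then A $ i $ i * A $ j $ j - A $ i $ j * A $ j $ i else 0)"

(* sigma_2^{ij} = d sigma_2 / d a_ij at A, for symmetric A: trace(A) delta_ij - a_ij *)
definition sigma2_cof :: "real^3^3 \<Rightarrow> 3 \<Rightarrow> 3 \<Rightarrow> real" where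
  "sigma2_cof A i j = sigma1 A * (if i = j then 1 else 0) - A $ i $ j"

definition lap :: "(real^3 \<Rightarrow> real) \<Rightarrow> real^3 \<Rightarrow> real" where
  "lap u x = sigma1 (hess u x)"

definition two_convex :: "(real^3 \<Rightarrow> real) \<Rightarrow> bool" where
  "two_convex u \<longleftrightarrow> (\<forall>x. sigma1 (hess u x) > 0 \<and> sigma2 (hess u x) > 0)"

end

theory Submission
  imports Defs "HOL-Analysis.Cross3"
begin

text \<open>Differentiating \<open>\<sigma>\<^sub>2(D\<^sup>2u) = 1\<close> once gives \<open>\<sigma>\<^sub>2\<^sup>i\<^sup>j u\<^sub>i\<^sub>j\<^sub>k = 0\<close>; differentiating again
  and tracing gives \<open>\<sigma>\<^sub>2\<^sup>i\<^sup>j (\<Delta>u)\<^sub>i\<^sub>j = |D\<^sup>3u|\<^sup>2 - |\<nabla>\<Delta>u|\<^sup>2\<close>. With \<open>F = \<Delta>u\<close> the claim becomes the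
  pointwise inequality \<open>(26/25) \<sigma>\<^sub>2\<^sup>i\<^sup>j F\<^sub>i F\<^sub>j \<le> F (|D\<^sup>3u|\<^sup>2 - |\<nabla>F|\<^sup>2)\<close> for the symmetric 3-tensor
  \<open>T = D\<^sup>3u\<close>, whose traces are the \<open>F\<^sub>k\<close> and which satisfies \<open>\<sigma>\<^sub>2\<^sup>i\<^sup>j T\<^sub>i\<^sub>j\<^sub>k = 0\<close>. In an eigenframe of
  \<open>D\<^sup>2u\<close> both sides split into one block per index \<open>k\<close>, and in each block the constraint reduces the
  estimate to a binary quadratic form that is positive semidefinite because \<open>\<sigma>\<^sub>1, \<sigma>\<^sub>2 > 0\<close>.\<close>

section \<open>Partial derivatives\<close>

text \<open>Unlike \<open>pd\<close>, which is \<open>deriv\<close> and hence meaningless where the derivative does not exist,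
  \<open>has_partial\<close> asserts existence.\<close>

definition has_partial :: "3 \<Rightarrow> (real^3 \<Rightarrow> real) \<Rightarrow> (real^3 \<Rightarrow> real) \<Rightarrow> bool" where
  "has_partial i f g \<longleftrightarrow> (\<forall>x. ((\<lambda>t. f (x + t *\<^sub>R axis i 1)) has_real_derivative g x) (at 0))"

lemma has_partial_pd: "has_pd_everywhere i f \<Longrightarrow> has_partial i f (pd i f)"
  unfolding has_partial_def has_pd_everywhere_def pd_def
  by (simp add: DERIV_deriv_iff_real_differentiable)

lemma pd_eqI: "has_partial i f g \<Longrightarrow> pd i f = g"
  unfolding has_partial_def pd_def by (auto intro!: DERIV_imp_deriv)

lemma has_partial_unique: "has_partial i f g \<Longrightarrow> has_partial i f h \<Longrightarrow> g x = h x"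
  by (metis pd_eqI)

lemma has_partial_cong: "has_partial i f g \<Longrightarrow> (\<And>x. g x = h x) \<Longrightarrow> has_partial i f h"
  by (metis ext)

lemma has_partial_along_line:
  assumes "has_partial i f g"
  shows "((\<lambda>t. f (x + t *\<^sub>R axis i 1)) has_real_derivative g (x + s *\<^sub>R axis i 1)) (at s)"
proof -
  have "((\<lambda>t. f ((x + s *\<^sub>R axis i 1) + t *\<^sub>R axis i 1)) has_real_derivative g (x + s *\<^sub>R axis i 1)) (at 0)"
    using assms unfolding has_partial_def by blast
  moreover have "(\<lambda>t. f ((x + s *\<^sub>R axis i 1) + t *\<^sub>R axis i 1)) = (\<lambda>t. f (x + (t + s) *\<^sub>R axis i 1))"
    by (simp add: algebra_simps)
  ultimately show ?thesis using DERIV_shift[of "\<lambda>t. f (x + t *\<^sub>R axis i 1)" _ 0 s] by simp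
qed

lemma has_partial_const: "has_partial i (\<lambda>x. c) (\<lambda>x. 0)"
  unfolding has_partial_def by simp

lemma has_partial_add:
  "has_partial i f f' \<Longrightarrow> has_partial i g g' \<Longrightarrow> has_partial i (\<lambda>x. f x + g x) (\<lambda>x. f' x + g' x)"
  unfolding has_partial_def by (auto intro: DERIV_add)

lemma has_partial_diff:
  "has_partial i f f' \<Longrightarrow> has_partial i g g' \<Longrightarrow> has_partial i (\<lambda>x. f x - g x) (\<lambda>x. f' x - g' x)"
  unfolding has_partial_def by (auto intro: DERIV_diff)

lemma has_partial_mult:
  "has_partial i f f' \<Longrightarrow> has_partial i g g' \<Longrightarrow>
    has_partial i (\<lambda>x. f x * g x) (\<lambda>x. f' x * g x + f x * g' x)"
  unfolding has_partial_def by (auto intro: derivative_eq_intros)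

lemma has_partial_sum:
  "(\<And>k. has_partial i (f k) (f' k)) \<Longrightarrow>
    has_partial i (\<lambda>x. \<Sum>k\<in>S. f k x) (\<lambda>x. \<Sum>k\<in>S. f' k x)"
  unfolding has_partial_def by (auto intro: DERIV_sum)

lemma has_partial_ln:
  "(\<And>x. f x > 0) \<Longrightarrow> has_partial i f f' \<Longrightarrow> has_partial i (\<lambda>x. ln (f x)) (\<lambda>x. f' x / f x)"
  unfolding has_partial_def by (auto intro!: derivative_eq_intros simp: field_simps)

lemma has_partial_divide:
  "(\<And>x. g x \<noteq> 0) \<Longrightarrow> has_partial i f f' \<Longrightarrow> has_partial i g g' \<Longrightarrow>
    has_partial i (\<lambda>x. f x / g x) (\<lambda>x. (f' x * g x - f x * g' x) / (g x * g x))"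
  unfolding has_partial_def by (auto intro!: derivative_eq_intros simp: field_simps)

lemma mixed_difference_mvt:
  assumes gi: "has_partial i g gi" and gij: "has_partial j gi gij" and h: "h > 0"
  obtains \<sigma> \<tau> where "0 < \<sigma>" "\<sigma> < h" "0 < \<tau>" "\<tau> < h"
    "g (x + h *\<^sub>R axis i 1 + h *\<^sub>R axis j 1) - g (x + h *\<^sub>R axis j 1) - g (x + h *\<^sub>R axis i 1) + g x
       = h * h * gij (x + \<sigma> *\<^sub>R axis i 1 + \<tau> *\<^sub>R axis j 1)"
proof -
  define ei :: "real^3" where "ei = axis i 1"
  define ej :: "real^3" where "ej = axis j 1"
  define \<phi> where "\<phi> s = g ((x + h *\<^sub>R ej) + s *\<^sub>R ei) - g (x + s *\<^sub>R ei)" for s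
  have d\<phi>: "DERIV \<phi> s :> gi ((x + h *\<^sub>R ej) + s *\<^sub>R ei) - gi (x + s *\<^sub>R ei)" for s
    unfolding \<phi>_def ei_def by (intro DERIV_diff has_partial_along_line[OF gi])
  obtain \<sigma> where \<sigma>: "0 < \<sigma>" "\<sigma> < h"
    and \<phi>: "\<phi> h - \<phi> 0 = (h - 0) * (gi ((x + h *\<^sub>R ej) + \<sigma> *\<^sub>R ei) - gi (x + \<sigma> *\<^sub>R ei))"
    using MVT2[OF h d\<phi>] by blast
  define \<psi> where "\<psi> t = gi ((x + \<sigma> *\<^sub>R ei) + t *\<^sub>R ej)" for t
  have d\<psi>: "DERIV \<psi> t :> gij ((x + \<sigma> *\<^sub>R ei) + t *\<^sub>R ej)" for t
    unfolding \<psi>_def ej_def by (rule has_partial_along_line[OF gij])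
  obtain \<tau> where \<tau>: "0 < \<tau>" "\<tau> < h" and \<psi>: "\<psi> h - \<psi> 0 = (h - 0) * gij ((x + \<sigma> *\<^sub>R ei) + \<tau> *\<^sub>R ej)"
    using MVT2[OF h d\<psi>] by blast
  have "\<psi> h - \<psi> 0 = gi ((x + h *\<^sub>R ej) + \<sigma> *\<^sub>R ei) - gi (x + \<sigma> *\<^sub>R ei)"
    unfolding \<psi>_def by (simp add: algebra_simps)
  with \<phi> \<psi> have "\<phi> h - \<phi> 0 = h * (h * gij ((x + \<sigma> *\<^sub>R ei) + \<tau> *\<^sub>R ej))"
    by simp
  moreover have "\<phi> h - \<phi> 0 = g (x + h *\<^sub>R ei + h *\<^sub>R ej) - g (x + h *\<^sub>R ej) - g (x + h *\<^sub>R ei) + g x"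
    unfolding \<phi>_def by (simp add: algebra_simps)
  ultimately show ?thesis
    using that[OF \<sigma> \<tau>] unfolding ei_def ej_def by (metis mult.assoc)
qed

lemma dist_axis_step_less:
  fixes x :: "real^3" and k m :: 3
  assumes "0 < a" "a < h" "0 < b" "b < h"
  shows "dist (x + a *\<^sub>R axis k 1 + b *\<^sub>R axis m 1) x < 2 * h"
proof -
  have "dist (x + a *\<^sub>R axis k 1 + b *\<^sub>R axis m 1) x = norm (a *\<^sub>R axis k (1::real) + b *\<^sub>R axis m 1)"
    by (simp add: dist_norm)
  also have "\<dots> \<le> a + b"
    using norm_triangle_ineq[of "a *\<^sub>R axis k (1::real)" "b *\<^sub>R axis m 1"] assms by simp
  finally show ?thesis using assms by simp
qed

text \<open>Schwarz's theorem: both mixed partials are limits of the same second difference quotient.\<close>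

lemma mixed_partials_eq:
  assumes gi: "has_partial i g gi" and gj: "has_partial j g gj"
    and gij: "has_partial j gi gij" and gji: "has_partial i gj gji"
    and "continuous_on UNIV gij" "continuous_on UNIV gji"
  shows "gij x = gji x"
proof (rule ccontr)
  assume "gij x \<noteq> gji x"
  define d where "d = \<bar>gij x - gji x\<bar> / 2"
  have d: "d > 0" using \<open>gij x \<noteq> gji x\<close> unfolding d_def by simp
  have "isCont gij x" "isCont gji x"
    using assms(5,6) by (simp_all add: continuous_on_eq_continuous_at)
  then obtain e1 e2 where e: "e1 > 0" "e2 > 0"
    and e1: "\<And>y. dist y x < e1 \<Longrightarrow> \<bar>gij y - gij x\<bar> < d"
    and e2: "\<And>y. dist y x < e2 \<Longrightarrow> \<bar>gji y - gji x\<bar> < d"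
    using d unfolding continuous_at_eps_delta dist_real_def by blast
  define h where "h = min e1 e2 / 2"
  have h: "h > 0" using e unfolding h_def by simp
  obtain s1 t1 where st1: "0 < s1" "s1 < h" "0 < t1" "t1 < h" and
    r1: "g (x + h *\<^sub>R axis i 1 + h *\<^sub>R axis j 1) - g (x + h *\<^sub>R axis j 1) - g (x + h *\<^sub>R axis i 1) + g x
       = h * h * gij (x + s1 *\<^sub>R axis i 1 + t1 *\<^sub>R axis j 1)"
    using mixed_difference_mvt[OF gi gij h] by blast
  obtain s2 t2 where st2: "0 < s2" "s2 < h" "0 < t2" "t2 < h" and
    r2: "g (x + h *\<^sub>R axis j 1 + h *\<^sub>R axis i 1) - g (x + h *\<^sub>R axis i 1) - g (x + h *\<^sub>R axis j 1) + g x
       = h * h * gji (x + s2 *\<^sub>R axis j 1 + t2 *\<^sub>R axis i 1)"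
    using mixed_difference_mvt[OF gj gji h] by blast
  have swap: "x + h *\<^sub>R axis j 1 + h *\<^sub>R axis i 1 = x + h *\<^sub>R axis i 1 + h *\<^sub>R axis j 1"
    by (simp add: algebra_simps)
  have "h * h * gij (x + s1 *\<^sub>R axis i 1 + t1 *\<^sub>R axis j 1)
      = h * h * gji (x + s2 *\<^sub>R axis j 1 + t2 *\<^sub>R axis i 1)"
    using r1 r2[unfolded swap] by linarith
  with h have eq: "gij (x + s1 *\<^sub>R axis i 1 + t1 *\<^sub>R axis j 1) = gji (x + s2 *\<^sub>R axis j 1 + t2 *\<^sub>R axis i 1)"
    by simp
  have "\<bar>gij (x + s1 *\<^sub>R axis i 1 + t1 *\<^sub>R axis j 1) - gij x\<bar> < d"
    using e1 dist_axis_step_less[OF st1] unfolding h_def by simp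
  moreover have "\<bar>gji (x + s2 *\<^sub>R axis j 1 + t2 *\<^sub>R axis i 1) - gji x\<bar> < d"
    using e2 dist_axis_step_less[OF st2] unfolding h_def by simp
  moreover have "\<bar>gij x - gji x\<bar> \<le> \<bar>gij (x + s1 *\<^sub>R axis i 1 + t1 *\<^sub>R axis j 1) - gij x\<bar>
      + \<bar>gji (x + s2 *\<^sub>R axis j 1 + t2 *\<^sub>R axis i 1) - gji x\<bar>"
    using eq abs_triangle_ineq4[of "gij (x + s1 *\<^sub>R axis i 1 + t1 *\<^sub>R axis j 1) - gij x"] by simp
  ultimately show False unfolding d_def by (metis add_strict_mono field_sum_of_halves not_le)
qed

lemma Ck_Suc_imp_Ck: "Ck (Suc k) f \<Longrightarrow> Ck k f"
  by (induction k arbitrary: f) auto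

lemma Ck_le:
  assumes "Ck n f" and "k \<le> n"
  shows "Ck k f"
  using assms(2,1) by (induction rule: inc_induct) (blast dest: Ck_Suc_imp_Ck)+

lemma pd_commute:
  assumes "Ck 2 g"
  shows "pd i (pd j g) = pd j (pd i g)"
proof
  fix x
  have "has_pd_everywhere i g" "has_pd_everywhere j g"
    "has_pd_everywhere i (pd j g)" "has_pd_everywhere j (pd i g)"
    "continuous_on UNIV (pd i (pd j g))" "continuous_on UNIV (pd j (pd i g))"
    using assms by (simp_all add: numeral_2_eq_2)
  then show "pd i (pd j g) x = pd j (pd i g) x"
    by (blast intro: mixed_partials_eq[OF has_partial_pd has_partial_pd has_partial_pd has_partial_pd])
qed

section \<open>The pointwise inequality in an eigenframe\<close>

lemma binary_quadratic_form_nonneg: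
  fixes M11 M12 M22 x y :: real
  assumes "M11 > 0" and "M11 * M22 - M12^2 \<ge> 0"
  shows "M11 * x^2 + 2 * M12 * x * y + M22 * y^2 \<ge> 0"
proof -
  have "M11 * (M11 * x^2 + 2 * M12 * x * y + M22 * y^2) = (M11 * x + M12 * y)^2 + (M11 * M22 - M12^2) * y^2"
    by (simp add: power2_eq_square algebra_simps)
  also have "\<dots> \<ge> 0" using assms(2) by simp
  finally show ?thesis using assms(1) by (simp add: zero_le_mult_iff)
qed

lemma sigma2_pos_imp_pair_sums_pos:
  fixes a b c :: real
  assumes "a + b + c > 0" and "a * b + b * c + c * a > 0"
  shows "b + c > 0" and "4 * a + b + c > 0"
proof -
  define p where "p = b + c"
  have bc: "4 * (b * c) \<le> p^2"
    using zero_le_power2[of "b - c"] unfolding p_def by (simp add: power2_eq_square algebra_simps)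
  have sigma2: "a * b + b * c + c * a = a * p + b * c" unfolding p_def by (simp add: algebra_simps)
  with assms(2) bc have pos: "p * (4 * a + p) > 0" by (simp add: power2_eq_square algebra_simps)
  show "b + c > 0"
  proof (rule ccontr)
    assume "\<not> b + c > 0"
    then have "p \<le> 0" "4 * a + p \<ge> 0" using assms(1) unfolding p_def by simp_all
    then show False using pos by (simp add: mult_nonpos_nonneg leD)
  qed
  with pos show "4 * a + b + c > 0" unfolding p_def by (simp add: zero_less_mult_iff)
qed

text \<open>After eliminating \<open>x1\<close> by the constraint, the claim becomes nonnegativity of a binary
  quadratic form in \<open>x2, x3\<close>, whose leading coefficient exceeds \<open>5 \<sigma>\<^sub>2\<close> by a sum of squares and whose
  determinant is \<open>\<sigma>\<^sub>1\<close> times an expression that is visibly nonnegative once \<open>b + c > 0\<close> and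
  \<open>4a + b + c > 0\<close>.\<close>

lemma constrained_block_ineq:
  fixes a b c x1 x2 x3 :: real
  assumes s1: "a + b + c > 0" and s2: "a * b + b * c + c * a > 0"
    and constraint: "(b + c) * x1 + (a + c) * x2 + (a + b) * x3 = 0"
  shows "(26/25) * (b + c) * (x1 + x2 + x3)^2 \<le> (a + b + c) * (x1^2 + 3 * x2^2 + 3 * x3^2 - (x1 + x2 + x3)^2)"
proof -
  define k :: real where "k = 26/25"
  define S where "S = a + b + c"
  define p where "p = b + c"
  have p: "p > 0" and ap: "4 * a + p > 0"
    using sigma2_pos_imp_pair_sums_pos[OF s1 s2] unfolding p_def by simp_all
  define M11 where "M11 = 2 * S * (S + c) - k * (b - a)^2"
  define M22 where "M22 = 2 * S * (S + b) - k * (c - a)^2"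
  define M12 where "M12 = 2 * S * a - k * (b - a) * (c - a)"
  have "M11 - 5 * (a * b + b * c + c * a) = (3/4) * (a + b + (2/3) * c)^2 + (21/100) * (a - b)^2 + (11/3) * c^2"
    unfolding M11_def S_def k_def by (simp add: power2_eq_square field_simps)
  also have "\<dots> \<ge> 0" by simp
  finally have M11: "M11 > 0"
    using s2 by simp
  have "M11 * M22 - M12^2 = S * (4 * S * (a * b + b * c + c * a) + 10 * k * p * (a * b + b * c + c * a)
      + p * (44 * a^2 + p * (296 * a + 96 * p)) / 25)"
    unfolding M11_def M22_def M12_def S_def p_def k_def by (simp add: power2_eq_square field_simps)
  also have "\<dots> \<ge> 0"
    using s1 s2 p ap unfolding S_def k_def by (simp add: add_pos_nonneg)
  finally have "M11 * x2^2 + 2 * M12 * x2 * x3 + M22 * x3^2 \<ge> 0"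
    by (rule binary_quadratic_form_nonneg[OF M11])
  moreover have "p^2 * (S * (x1^2 + 3 * x2^2 + 3 * x3^2 - (x1 + x2 + x3)^2) - k * p * (x1 + x2 + x3)^2)
      = p * (M11 * x2^2 + 2 * M12 * x2 * x3 + M22 * x3^2)"
  proof -
    have x1: "p * x1 = - ((a + c) * x2 + (a + b) * x3)"
      using constraint unfolding p_def by (simp add: algebra_simps)
    have "p^2 * (S * (x1^2 + 3 * x2^2 + 3 * x3^2 - (x1 + x2 + x3)^2) - k * p * (x1 + x2 + x3)^2)
      = S * ((p * x1)^2 + 3 * p^2 * x2^2 + 3 * p^2 * x3^2 - (p * x1 + p * x2 + p * x3)^2)
        - k * p * (p * x1 + p * x2 + p * x3)^2"
      by (simp add: power2_eq_square algebra_simps)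
    also have "\<dots> = p * (M11 * x2^2 + 2 * M12 * x2 * x3 + M22 * x3^2)"
      unfolding x1 by (simp add: M11_def M12_def M22_def S_def p_def power2_eq_square algebra_simps)
    finally show ?thesis .
  qed
  ultimately have "p^2 * (S * (x1^2 + 3 * x2^2 + 3 * x3^2 - (x1 + x2 + x3)^2) - k * p * (x1 + x2 + x3)^2) \<ge> 0"
    using p by simp
  then show ?thesis
    using p unfolding S_def p_def k_def by (simp add: zero_le_mult_iff)
qed

definition symmetric3 :: "(3 \<Rightarrow> 3 \<Rightarrow> 3 \<Rightarrow> real) \<Rightarrow> bool" where
  "symmetric3 T \<longleftrightarrow> (\<forall>i j k. T i j k = T j i k \<and> T i j k = T i k j)"

definition tensor_trace :: "(3 \<Rightarrow> 3 \<Rightarrow> 3 \<Rightarrow> real) \<Rightarrow> 3 \<Rightarrow> real" where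
  "tensor_trace T k = (\<Sum>i\<in>UNIV. T i i k)"

definition tensor_norm2 :: "(3 \<Rightarrow> 3 \<Rightarrow> 3 \<Rightarrow> real) \<Rightarrow> real" where
  "tensor_norm2 T = (\<Sum>i\<in>UNIV. \<Sum>j\<in>UNIV. \<Sum>k\<in>UNIV. (T i j k)^2)"

text \<open>Each \<open>k\<close> gives one instance of \<open>constrained_block_ineq\<close>; the only component not covered
  by a block is \<open>T\<^sub>1\<^sub>2\<^sub>3\<close>, which enters the right-hand side with the nonnegative weight \<open>6 \<sigma>\<^sub>1\<close>.\<close>

lemma diagonal_tensor_ineq:
  fixes l :: "3 \<Rightarrow> real" and T :: "3 \<Rightarrow> 3 \<Rightarrow> 3 \<Rightarrow> real"
  assumes sym: "symmetric3 T"
    and s1: "l 1 + l 2 + l 3 > 0" and s2: "l 1 * l 2 + l 2 * l 3 + l 3 * l 1 > 0"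
    and constraint: "\<And>k. (\<Sum>i\<in>UNIV. (l 1 + l 2 + l 3 - l i) * T i i k) = 0"
  shows "(26/25) * (\<Sum>k\<in>UNIV. (l 1 + l 2 + l 3 - l k) * (tensor_trace T k)^2)
    \<le> (l 1 + l 2 + l 3) * (tensor_norm2 T - (\<Sum>k\<in>UNIV. (tensor_trace T k)^2))"
proof -
  have r: "T 1 2 1 = T 1 1 2" "T 1 2 2 = T 2 2 1" "T 1 3 1 = T 1 1 3" "T 1 3 2 = T 1 2 3"
    "T 1 3 3 = T 3 3 1" "T 2 1 1 = T 1 1 2" "T 2 1 2 = T 2 2 1" "T 2 1 3 = T 1 2 3"
    "T 2 3 1 = T 1 2 3" "T 2 3 2 = T 2 2 3" "T 2 3 3 = T 3 3 2" "T 3 1 1 = T 1 1 3"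
    "T 3 1 2 = T 1 2 3" "T 3 1 3 = T 3 3 1" "T 3 2 1 = T 1 2 3" "T 3 2 2 = T 2 2 3"
    "T 3 2 3 = T 3 3 2"
    using sym unfolding symmetric3_def by metis+
  define s where "s = l 1 + l 2 + l 3"
  have i1: "(26/25) * (l 2 + l 3) * (T 1 1 1 + T 2 2 1 + T 3 3 1)^2
      \<le> s * ((T 1 1 1)^2 + 3 * (T 2 2 1)^2 + 3 * (T 3 3 1)^2 - (T 1 1 1 + T 2 2 1 + T 3 3 1)^2)"
  proof -
    have "(l 2 + l 3) * T 1 1 1 + (l 1 + l 3) * T 2 2 1 + (l 1 + l 2) * T 3 3 1 = 0"
      using constraint[of 1] by (simp add: sum_3 algebra_simps)
    from constrained_block_ineq[OF s1 s2 this] show ?thesis unfolding s_def .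
  qed
  have i2: "(26/25) * (l 1 + l 3) * (T 2 2 2 + T 1 1 2 + T 3 3 2)^2
      \<le> s * ((T 2 2 2)^2 + 3 * (T 1 1 2)^2 + 3 * (T 3 3 2)^2 - (T 2 2 2 + T 1 1 2 + T 3 3 2)^2)"
  proof -
    have "l 2 + l 1 + l 3 > 0" "l 2 * l 1 + l 1 * l 3 + l 3 * l 2 > 0"
      using s1 s2 by (simp_all add: algebra_simps)
    moreover have "(l 1 + l 3) * T 2 2 2 + (l 2 + l 3) * T 1 1 2 + (l 2 + l 1) * T 3 3 2 = 0"
      using constraint[of 2] by (simp add: sum_3 algebra_simps)
    ultimately have "(26/25) * (l 1 + l 3) * (T 2 2 2 + T 1 1 2 + T 3 3 2)^2
      \<le> (l 2 + l 1 + l 3) * ((T 2 2 2)^2 + 3 * (T 1 1 2)^2 + 3 * (T 3 3 2)^2 - (T 2 2 2 + T 1 1 2 + T 3 3 2)^2)"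
      by (rule constrained_block_ineq)
    moreover have "l 2 + l 1 + l 3 = s" unfolding s_def by simp
    ultimately show ?thesis by simp
  qed
  have i3: "(26/25) * (l 1 + l 2) * (T 3 3 3 + T 1 1 3 + T 2 2 3)^2
      \<le> s * ((T 3 3 3)^2 + 3 * (T 1 1 3)^2 + 3 * (T 2 2 3)^2 - (T 3 3 3 + T 1 1 3 + T 2 2 3)^2)"
  proof -
    have "l 3 + l 1 + l 2 > 0" "l 3 * l 1 + l 1 * l 2 + l 2 * l 3 > 0"
      using s1 s2 by (simp_all add: algebra_simps)
    moreover have "(l 1 + l 2) * T 3 3 3 + (l 3 + l 2) * T 1 1 3 + (l 3 + l 1) * T 2 2 3 = 0"
      using constraint[of 3] by (simp add: sum_3 algebra_simps)
    ultimately have "(26/25) * (l 1 + l 2) * (T 3 3 3 + T 1 1 3 + T 2 2 3)^2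
      \<le> (l 3 + l 1 + l 2) * ((T 3 3 3)^2 + 3 * (T 1 1 3)^2 + 3 * (T 2 2 3)^2 - (T 3 3 3 + T 1 1 3 + T 2 2 3)^2)"
      by (rule constrained_block_ineq)
    moreover have "l 3 + l 1 + l 2 = s" unfolding s_def by simp
    ultimately show ?thesis by simp
  qed
  have "0 \<le> s * (6 * (T 1 2 3)^2)" using s1 unfolding s_def by simp
  moreover have "(26/25) * (\<Sum>k\<in>UNIV. (s - l k) * (tensor_trace T k)^2)
      = (26/25) * (l 2 + l 3) * (T 1 1 1 + T 2 2 1 + T 3 3 1)^2 + (26/25) * (l 1 + l 3) * (T 2 2 2 + T 1 1 2 + T 3 3 2)^2
        + (26/25) * (l 1 + l 2) * (T 3 3 3 + T 1 1 3 + T 2 2 3)^2"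
    unfolding s_def tensor_trace_def by (simp add: sum_3 algebra_simps add_divide_distrib)
  moreover have "s * (tensor_norm2 T - (\<Sum>k\<in>UNIV. (tensor_trace T k)^2))
      = s * ((T 1 1 1)^2 + 3 * (T 2 2 1)^2 + 3 * (T 3 3 1)^2 - (T 1 1 1 + T 2 2 1 + T 3 3 1)^2)
        + s * ((T 2 2 2)^2 + 3 * (T 1 1 2)^2 + 3 * (T 3 3 2)^2 - (T 2 2 2 + T 1 1 2 + T 3 3 2)^2)
        + s * ((T 3 3 3)^2 + 3 * (T 1 1 3)^2 + 3 * (T 2 2 3)^2 - (T 3 3 3 + T 1 1 3 + T 2 2 3)^2)
        + s * (6 * (T 1 2 3)^2)"
    unfolding tensor_norm2_def tensor_trace_def by (simp add: sum_3 r power2_eq_square algebra_simps)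
  ultimately show ?thesis
    using add_mono[OF add_mono[OF i1 i2] i3] unfolding s_def[symmetric] by linarith
qed

section \<open>Spectral theorem for symmetric \<open>3 \<times> 3\<close> matrices\<close>

lemma nonpos_if_linear_le_quadratic:
  fixes R C :: real
  assumes "\<And>t. t > 0 \<Longrightarrow> t * R \<le> t^2 * C"
  shows "R \<le> 0"
proof (rule ccontr)
  assume "\<not> R \<le> 0"
  define t where "t = R / (\<bar>C\<bar> + 1)"
  have R: "R > 0" and t: "t > 0" using \<open>\<not> R \<le> 0\<close> unfolding t_def by auto
  have "t * R \<le> t^2 * C" using assms[OF t] .
  also have "\<dots> < t^2 * (\<bar>C\<bar> + 1)" using t by (simp add: abs_ge_self add.commute add_strict_increasing)
  also have "\<dots> = t * R" unfolding t_def by (simp add: power2_eq_square)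
  finally show False by simp
qed

lemma symmetric_matrix_inner:
  fixes A :: "real^'n^'n"
  assumes "transpose A = A"
  shows "x \<bullet> (A *v y) = (A *v x) \<bullet> y"
  by (metis assms dot_lmul_matrix transpose_matrix_vector)

text \<open>First variation of the Rayleigh quotient at a maximiser \<open>v\<close> in the direction \<open>r \<bottom> v\<close>.\<close>

lemma rayleigh_quotient_stationary:
  fixes A :: "real^'n^'n"
  assumes symA: "transpose A = A" and vv: "v \<bullet> v = 1" and rv: "r \<bullet> v = 0"
    and max: "\<And>t. (v + t *\<^sub>R r) \<bullet> (A *v (v + t *\<^sub>R r)) \<le> (v \<bullet> (A *v v)) * ((v + t *\<^sub>R r) \<bullet> (v + t *\<^sub>R r))"
  shows "r \<bullet> (A *v v) = 0"
proof -
  define C where "C = (v \<bullet> (A *v v)) * (r \<bullet> r) - r \<bullet> (A *v r)"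
  have vAr: "v \<bullet> (A *v r) = r \<bullet> (A *v v)"
    using symmetric_matrix_inner[OF symA, of v r] by (simp add: inner_commute)
  have expand: "t * (2 * (r \<bullet> (A *v v))) \<le> t^2 * C" for t
    using max[of t] vv rv vAr unfolding C_def
    by (simp add: matrix_vector_right_distrib matrix_vector_mult_scaleR inner_add_left
        inner_add_right inner_commute power2_eq_square algebra_simps)
  have "2 * (r \<bullet> (A *v v)) \<le> 0"
    by (rule nonpos_if_linear_le_quadratic) (use expand in blast)
  moreover have "- (2 * (r \<bullet> (A *v v))) \<le> 0"
    by (rule nonpos_if_linear_le_quadratic) (use expand[of "- _"] in simp)
  ultimately show ?thesis by simp
qed

lemma exists_unit_eigenvector_orthogonal:
  fixes A :: "real^'n^'n" and Z :: "(real^'n) set"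
  assumes symA: "transpose A = A"
    and inv: "\<And>x. (\<forall>z\<in>Z. x \<bullet> z = 0) \<Longrightarrow> (\<forall>z\<in>Z. (A *v x) \<bullet> z = 0)"
    and ne: "\<exists>x. norm x = 1 \<and> (\<forall>z\<in>Z. x \<bullet> z = 0)"
  obtains v where "norm v = 1" "\<forall>z\<in>Z. v \<bullet> z = 0" "A *v v = (v \<bullet> (A *v v)) *\<^sub>R v"
proof -
  define K where "K = sphere 0 1 \<inter> (\<Inter>z\<in>Z. {x. z \<bullet> x = 0})"
  have K: "x \<in> K \<longleftrightarrow> norm x = 1 \<and> (\<forall>z\<in>Z. x \<bullet> z = 0)" for x
    unfolding K_def by (auto simp: inner_commute)
  have "compact K" unfolding K_def
    by (intro compact_Int_closed compact_sphere closed_INT ballI closed_hyperplane)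
  moreover have "K \<noteq> {}" using ne K by auto
  moreover define q where "q x = x \<bullet> (A *v x)" for x
  moreover have "continuous_on K q" unfolding q_def by (intro continuous_intros)
  ultimately obtain v where "v \<in> K" and vmax: "\<And>y. y \<in> K \<Longrightarrow> q y \<le> q v"
    using continuous_attains_sup by metis
  then have v1: "norm v = 1" and vZ: "\<forall>z\<in>Z. v \<bullet> z = 0" using K by auto
  have vv: "v \<bullet> v = 1" using v1 by (simp add: dot_square_norm)
  have max: "q w \<le> q v * (w \<bullet> w)" if wZ: "\<forall>z\<in>Z. w \<bullet> z = 0" for w
  proof (cases "w = 0")
    case False
    then have "(1 / norm w) *\<^sub>R w \<in> K" using wZ K by simp
    then have "q ((1 / norm w) *\<^sub>R w) \<le> q v" by (rule vmax)
    moreover have "q ((1 / norm w) *\<^sub>R w) = q w / (w \<bullet> w)"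
      unfolding q_def by (simp add: matrix_vector_mult_scaleR dot_square_norm power2_eq_square)
    ultimately show ?thesis using False by (simp add: divide_le_eq)
  qed (simp add: q_def)
  define r where "r = A *v v - q v *\<^sub>R v"
  have rZ: "\<forall>z\<in>Z. r \<bullet> z = 0" using inv[OF vZ] vZ unfolding r_def by (simp add: inner_diff_left)
  have rv: "r \<bullet> v = 0" unfolding r_def q_def using vv by (simp add: inner_diff_left inner_commute[of "A *v v" v])
  have "r \<bullet> (A *v v) = 0"
  proof (rule rayleigh_quotient_stationary[OF symA vv rv])
    fix t
    have "\<forall>z\<in>Z. (v + t *\<^sub>R r) \<bullet> z = 0" using rZ vZ by (simp add: inner_add_left)
    from max[OF this]
    show "(v + t *\<^sub>R r) \<bullet> (A *v (v + t *\<^sub>R r)) \<le> (v \<bullet> (A *v v)) * ((v + t *\<^sub>R r) \<bullet> (v + t *\<^sub>R r))"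
      unfolding q_def .
  qed
  moreover have "r \<bullet> (A *v v) = r \<bullet> r"
    using rv unfolding r_def by (simp add: inner_diff_right inner_commute)
  ultimately have "A *v v = q v *\<^sub>R v" unfolding r_def by simp
  then show ?thesis using that v1 vZ unfolding q_def by blast
qed

text \<open>\<open>P i a\<close> is the \<open>i\<close>-th coordinate of the \<open>a\<close>-th frame vector.\<close>

definition orthonormal_frame :: "(3 \<Rightarrow> 3 \<Rightarrow> real) \<Rightarrow> bool" where
  "orthonormal_frame P \<longleftrightarrow>
     (\<forall>a b. (\<Sum>i\<in>UNIV. P i a * P i b) = (if a = b then 1 else 0)) \<and>
     (\<forall>i j. (\<Sum>a\<in>UNIV. P i a * P j a) = (if i = j then 1 else 0))"

lemma orthonormal_frameD:
  assumes "orthonormal_frame P"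
  shows "(\<Sum>i\<in>UNIV. P i a * P i b) = (if a = b then 1 else 0)"
    and "(\<Sum>a\<in>UNIV. P i a * P j a) = (if i = j then 1 else 0)"
  using assms unfolding orthonormal_frame_def by blast+

lemma orthonormal_frameI:
  assumes "\<And>a b. (\<Sum>i\<in>UNIV. P i a * P i b) = (if a = b then 1 else 0)"
  shows "orthonormal_frame P"
proof -
  define M :: "real^3^3" where "M = (\<chi> i a. P i a)"
  have "transpose M ** M = mat 1"
    by (simp add: M_def transpose_def matrix_matrix_mult_def mat_def vec_eq_iff assms)
  then have MM: "M ** transpose M = mat 1" using matrix_left_right_inverse by blast
  have "(\<Sum>a\<in>UNIV. P i a * P j a) = (if i = j then 1 else 0)" for i j
  proof -
    have "(M ** transpose M) $ i $ j = (\<Sum>a\<in>UNIV. P i a * P j a)"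
      by (simp add: M_def transpose_def matrix_matrix_mult_def)
    then show ?thesis unfolding MM by (simp add: mat_def)
  qed
  with assms show ?thesis unfolding orthonormal_frame_def by blast
qed

lemma symmetric3_eigenbasis:
  fixes A :: "real^3^3"
  assumes symA: "transpose A = A"
  obtains V :: "3 \<Rightarrow> real^3" where "\<And>a b. V a \<bullet> V b = (if a = b then 1 else 0)"
    and "\<And>a. A *v V a = (V a \<bullet> (A *v V a)) *\<^sub>R V a"
proof -
  have eigen_orth: "(A *v x) \<bullet> z = 0" if "A *v z = c *\<^sub>R z" "x \<bullet> z = 0" for x z c
    using symmetric_matrix_inner[OF symA, of x z] that by simp
  obtain x0 :: "real^3" where "norm x0 = 1" using vector_choose_size[of 1] by auto
  then obtain v1 where v1: "norm v1 = 1" "A *v v1 = (v1 \<bullet> (A *v v1)) *\<^sub>R v1"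
    using exists_unit_eigenvector_orthogonal[OF symA, of "{}"] by auto
  obtain y where "y \<noteq> 0" "orthogonal v1 y" using orthogonal_to_vector_exists[of v1] by auto
  then have "norm ((1 / norm y) *\<^sub>R y) = 1 \<and> (\<forall>z\<in>{v1}. ((1 / norm y) *\<^sub>R y) \<bullet> z = 0)"
    by (auto simp: orthogonal_def inner_commute)
  then have ne2: "\<exists>x. norm x = 1 \<and> (\<forall>z\<in>{v1}. x \<bullet> z = 0)" by blast
  have inv2: "\<forall>z\<in>{v1}. (A *v x) \<bullet> z = 0" if "\<forall>z\<in>{v1}. x \<bullet> z = 0" for x
    using that eigen_orth[OF v1(2), of x] by simp
  obtain v2 where v2: "norm v2 = 1" "\<forall>z\<in>{v1}. v2 \<bullet> z = 0" "A *v v2 = (v2 \<bullet> (A *v v2)) *\<^sub>R v2"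
    by (rule exists_unit_eigenvector_orthogonal[OF symA inv2 ne2])
  have "(norm (cross3 v1 v2))^2 = 1"
    using norm_cross_dot[of v1 v2] v1 v2 by (simp add: inner_commute)
  then have "norm (cross3 v1 v2) = 1 \<or> norm (cross3 v1 v2) = - 1"
    by (simp add: power2_eq_1_iff)
  then have "norm (cross3 v1 v2) = 1"
    using norm_ge_zero[of "cross3 v1 v2"] by linarith
  moreover have "cross3 v1 v2 \<bullet> v1 = 0" "cross3 v1 v2 \<bullet> v2 = 0"
    using dot_cross_self(1,3)[of v1 v2] by (simp_all add: inner_commute)
  ultimately have ne3: "\<exists>x. norm x = 1 \<and> (\<forall>z\<in>{v1, v2}. x \<bullet> z = 0)" by blast
  have inv3: "\<forall>z\<in>{v1, v2}. (A *v x) \<bullet> z = 0" if "\<forall>z\<in>{v1, v2}. x \<bullet> z = 0" for x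
    using that eigen_orth[OF v1(2), of x] eigen_orth[OF v2(3), of x] by simp
  obtain v3 where v3: "norm v3 = 1" "\<forall>z\<in>{v1, v2}. v3 \<bullet> z = 0"
      "A *v v3 = (v3 \<bullet> (A *v v3)) *\<^sub>R v3"
    by (rule exists_unit_eigenvector_orthogonal[OF symA inv3 ne3])
  define V where "V a = (if a = 1 then v1 else if a = 2 then v2 else v3)" for a :: 3
  have unit: "v1 \<bullet> v1 = 1" "v2 \<bullet> v2 = 1" "v3 \<bullet> v3 = 1"
    using v1(1) v2(1) v3(1) by (simp_all add: dot_square_norm)
  have "v2 \<bullet> v1 = 0" "v3 \<bullet> v1 = 0" "v3 \<bullet> v2 = 0" using v2(2) v3(2) by simp_all
  then have orth: "v1 \<bullet> v2 = 0" "v2 \<bullet> v1 = 0" "v1 \<bullet> v3 = 0" "v3 \<bullet> v1 = 0" "v2 \<bullet> v3 = 0" "v3 \<bullet> v2 = 0"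
    by (simp_all add: inner_commute)
  have "V a \<bullet> V b = (if a = b then 1 else 0)" for a b
    using exhaust_3[of a] exhaust_3[of b] by (elim disjE) (simp_all add: V_def unit orth)
  moreover have "A *v V a = (V a \<bullet> (A *v V a)) *\<^sub>R V a" for a
    using exhaust_3[of a] v1(2) v2(3) v3(3) by (elim disjE) (simp_all add: V_def)
  ultimately show ?thesis by (rule that)
qed

lemma symmetric3_spectral:
  fixes A :: "real^3^3"
  assumes "\<And>i j. A$i$j = A$j$i"
  obtains P :: "3 \<Rightarrow> 3 \<Rightarrow> real" and l :: "3 \<Rightarrow> real"
  where "orthonormal_frame P" and "\<And>i j. A$i$j = (\<Sum>a\<in>UNIV. l a * P i a * P j a)"
proof -
  have symA: "transpose A = A" by (simp add: transpose_def vec_eq_iff assms)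
  obtain V :: "3 \<Rightarrow> real^3" where V: "\<And>a b. V a \<bullet> V b = (if a = b then 1 else 0)"
    and eigen: "\<And>a. A *v V a = (V a \<bullet> (A *v V a)) *\<^sub>R V a"
    using symmetric3_eigenbasis[OF symA] by blast
  define P where "P i a = V a $ i" for i a
  define l where "l a = V a \<bullet> (A *v V a)" for a
  have "(\<Sum>i\<in>UNIV. P i a * P i b) = V a \<bullet> V b" for a b
    by (simp add: P_def inner_vec_def)
  then have P: "orthonormal_frame P"
    using V by (simp add: orthonormal_frameI)
  have Al: "A *v V a = l a *\<^sub>R V a" for a
    using eigen unfolding l_def .
  have "A$i$j = (\<Sum>a\<in>UNIV. l a * P i a * P j a)" for i j
  proof -
    have "A$i$j = (\<Sum>k\<in>UNIV. A$i$k * (if k = j then 1 else 0))"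
      by (simp add: if_distrib cong: if_cong)
    also have "\<dots> = (\<Sum>k\<in>UNIV. A$i$k * (\<Sum>a\<in>UNIV. P k a * P j a))"
      by (simp add: orthonormal_frameD[OF P])
    also have "\<dots> = (\<Sum>k\<in>UNIV. \<Sum>a\<in>UNIV. A$i$k * P k a * P j a)"
      by (simp add: sum_distrib_left mult.assoc)
    also have "\<dots> = (\<Sum>a\<in>UNIV. \<Sum>k\<in>UNIV. A$i$k * P k a * P j a)"
      by (rule sum.swap)
    also have "\<dots> = (\<Sum>a\<in>UNIV. (\<Sum>k\<in>UNIV. A$i$k * P k a) * P j a)"
      by (simp add: sum_distrib_right)
    also have "\<dots> = (\<Sum>a\<in>UNIV. l a * P i a * P j a)"
      using Al by (simp add: P_def matrix_vector_mult_def vec_eq_iff)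
    finally show ?thesis .
  qed
  with P show ?thesis by (rule that)
qed

section \<open>Change of frame\<close>

lemma orthonormal_frame_transpose: "orthonormal_frame P \<Longrightarrow> orthonormal_frame (\<lambda>i a. P a i)"
  unfolding orthonormal_frame_def by simp

definition frame_coords :: "(3 \<Rightarrow> 3 \<Rightarrow> real) \<Rightarrow> (3 \<Rightarrow> real) \<Rightarrow> 3 \<Rightarrow> real" where
  "frame_coords P X a = (\<Sum>p\<in>UNIV. P p a * X p)"

lemma sum_weighted_frame_coords:
  "(\<Sum>a\<in>UNIV. m a * frame_coords P X a * frame_coords P Y a)
     = (\<Sum>p\<in>UNIV. \<Sum>q\<in>UNIV. (\<Sum>a\<in>UNIV. m a * P p a * P q a) * X p * Y q)"
  unfolding frame_coords_def by (simp add: sum_3 algebra_simps)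

lemma frame_coords_inner:
  assumes "orthonormal_frame P"
  shows "(\<Sum>a\<in>UNIV. frame_coords P X a * frame_coords P Y a) = (\<Sum>p\<in>UNIV. X p * Y p)"
  using sum_weighted_frame_coords[of "\<lambda>_. 1" P X Y]
  by (simp add: orthonormal_frameD(2)[OF assms] sum_3)

lemma frame_coords_sum_sq:
  "orthonormal_frame P \<Longrightarrow> (\<Sum>a\<in>UNIV. (frame_coords P X a)^2) = (\<Sum>p\<in>UNIV. (X p)^2)"
  using frame_coords_inner[of P X X] by (simp add: power2_eq_square)

lemma sigmas_eigenframe:
  assumes P: "orthonormal_frame P" and A: "\<And>i j. A$i$j = (\<Sum>a\<in>UNIV. l a * P i a * P j a)"
  shows "sigma1 A = l 1 + l 2 + l 3"
    and "sigma2 A = l 1 * l 2 + l 2 * l 3 + l 3 * l 1"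
    and "sigma2_cof A i j = (\<Sum>a\<in>UNIV. (sigma1 A - l a) * P i a * P j a)"
proof -
  have trace: "sigma1 A = (\<Sum>a\<in>UNIV. l a)"
  proof -
    have "sigma1 A = (\<Sum>i\<in>UNIV. \<Sum>a\<in>UNIV. l a * (P i a * P i a))"
      unfolding sigma1_def A by (simp add: mult.assoc)
    also have "\<dots> = (\<Sum>a\<in>UNIV. l a * (\<Sum>i\<in>UNIV. P i a * P i a))"
      by (subst sum.swap) (simp add: sum_distrib_left)
    finally show ?thesis by (simp add: orthonormal_frameD(1)[OF P])
  qed
  then show "sigma1 A = l 1 + l 2 + l 3" by (simp add: sum_3)
  have "(\<Sum>i\<in>UNIV. \<Sum>j\<in>UNIV. (A$i$j)^2) = (\<Sum>i\<in>UNIV. \<Sum>a\<in>UNIV. (l a * P i a)^2)"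
  proof (rule sum.cong[OF refl])
    fix i
    have "A$i$j = frame_coords (\<lambda>a j. P j a) (\<lambda>a. l a * P i a) j" for j
      unfolding A frame_coords_def by (simp add: mult_ac)
    then show "(\<Sum>j\<in>UNIV. (A$i$j)^2) = (\<Sum>a\<in>UNIV. (l a * P i a)^2)"
      by (simp add: frame_coords_sum_sq[OF orthonormal_frame_transpose[OF P]])
  qed
  also have "\<dots> = (\<Sum>a\<in>UNIV. (l a)^2 * (\<Sum>i\<in>UNIV. P i a * P i a))"
    by (subst sum.swap) (simp add: sum_distrib_left power2_eq_square mult_ac)
  finally have "(\<Sum>i\<in>UNIV. \<Sum>j\<in>UNIV. (A$i$j)^2) = (\<Sum>a\<in>UNIV. (l a)^2)"
    by (simp add: orthonormal_frameD(1)[OF P])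
  moreover have "A$i$j = A$j$i" for i j unfolding A by (simp add: mult_ac)
  then have "sigma2 A = ((sigma1 A)^2 - (\<Sum>i\<in>UNIV. \<Sum>j\<in>UNIV. (A$i$j)^2)) / 2"
    unfolding sigma2_def sigma1_def
    by (simp add: sum_3 power2_eq_square field_simps less_bit1_def bit1.Rep_numeral bit1.Rep_1)
  ultimately show "sigma2 A = l 1 * l 2 + l 2 * l 3 + l 3 * l 1"
    unfolding trace by (simp add: sum_3 power2_eq_square field_simps)
  have "sigma2_cof A i j = sigma1 A * (\<Sum>a\<in>UNIV. P i a * P j a) - (\<Sum>a\<in>UNIV. l a * P i a * P j a)"
    unfolding sigma2_cof_def A by (simp add: orthonormal_frameD(2)[OF P])
  then show "sigma2_cof A i j = (\<Sum>a\<in>UNIV. (sigma1 A - l a) * P i a * P j a)"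
    by (simp add: sum_distrib_left sum_subtractf[symmetric] algebra_simps)
qed

definition frame_tensor :: "(3 \<Rightarrow> 3 \<Rightarrow> real) \<Rightarrow> (3 \<Rightarrow> 3 \<Rightarrow> 3 \<Rightarrow> real) \<Rightarrow> 3 \<Rightarrow> 3 \<Rightarrow> 3 \<Rightarrow> real" where
  "frame_tensor P T a b c =
     frame_coords P (\<lambda>p. frame_coords P (\<lambda>q. frame_coords P (\<lambda>r. T p q r) c) b) a"

lemma frame_coords_pair_swap:
  assumes "\<And>p q. Z p q = Z q p"
  shows "frame_coords P (\<lambda>p. frame_coords P (Z p) b) a = frame_coords P (\<lambda>p. frame_coords P (Z p) a) b"
  unfolding frame_coords_def using assms by (simp add: sum_3 algebra_simps)

lemma symmetric3_frame_tensor: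
  assumes "symmetric3 T"
  shows "symmetric3 (frame_tensor P T)"
proof -
  have sym1: "T p q r = T q p r" and sym2: "T p q r = T p r q" for p q r
    using assms unfolding symmetric3_def by blast+
  have swap: "T p q = T q p" for p q by (rule ext) (rule sym1)
  have "frame_tensor P T a b c = frame_tensor P T b a c" for a b c
    unfolding frame_tensor_def by (rule frame_coords_pair_swap) (simp only: swap)
  moreover have "frame_tensor P T a b c = frame_tensor P T a c b" for a b c
    unfolding frame_tensor_def
    by (rule arg_cong[where f = "\<lambda>X. frame_coords P X a"], rule ext, rule frame_coords_pair_swap)
      (simp add: sym2)
  ultimately show ?thesis unfolding symmetric3_def by blast
qed

lemma sum_rotate3:
  fixes f :: "'a \<Rightarrow> 'b \<Rightarrow> 'c \<Rightarrow> 'd::comm_monoid_add"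
  assumes "finite A" "finite B" "finite C"
  shows "(\<Sum>a\<in>A. \<Sum>b\<in>B. \<Sum>c\<in>C. f a b c) = (\<Sum>b\<in>B. \<Sum>c\<in>C. \<Sum>a\<in>A. f a b c)"
  by (subst sum.swap) (simp add: sum.swap[of _ A])

lemma tensor_norm2_frame_tensor:
  assumes P: "orthonormal_frame P"
  shows "tensor_norm2 (frame_tensor P T) = tensor_norm2 T"
proof -
  define Y where "Y b c p = frame_coords P (\<lambda>q. frame_coords P (\<lambda>r. T p q r) c) b" for b c p
  define W where "W c p q = frame_coords P (\<lambda>r. T p q r) c" for c p q
  have "tensor_norm2 (frame_tensor P T) = (\<Sum>a\<in>UNIV. \<Sum>b\<in>UNIV. \<Sum>c\<in>UNIV. (frame_coords P (Y b c) a)^2)"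
    unfolding tensor_norm2_def frame_tensor_def Y_def ..
  also have "\<dots> = (\<Sum>b\<in>UNIV. \<Sum>c\<in>UNIV. \<Sum>a\<in>UNIV. (frame_coords P (Y b c) a)^2)"
    by (rule sum_rotate3) simp_all
  also have "\<dots> = (\<Sum>b\<in>UNIV. \<Sum>c\<in>UNIV. \<Sum>p\<in>UNIV. (frame_coords P (\<lambda>q. W c p q) b)^2)"
    unfolding frame_coords_sum_sq[OF P] Y_def W_def ..
  also have "\<dots> = (\<Sum>c\<in>UNIV. \<Sum>p\<in>UNIV. \<Sum>b\<in>UNIV. (frame_coords P (\<lambda>q. W c p q) b)^2)"
    by (rule sum_rotate3) simp_all
  also have "\<dots> = (\<Sum>c\<in>UNIV. \<Sum>p\<in>UNIV. \<Sum>q\<in>UNIV. (frame_coords P (\<lambda>r. T p q r) c)^2)"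
    unfolding frame_coords_sum_sq[OF P] W_def ..
  also have "\<dots> = (\<Sum>p\<in>UNIV. \<Sum>q\<in>UNIV. \<Sum>c\<in>UNIV. (frame_coords P (\<lambda>r. T p q r) c)^2)"
    by (rule sum_rotate3) simp_all
  also have "\<dots> = tensor_norm2 T"
    unfolding frame_coords_sum_sq[OF P] tensor_norm2_def ..
  finally show ?thesis .
qed

lemma weighted_trace_frame_tensor:
  "(\<Sum>a\<in>UNIV. m a * frame_tensor P T a a c)
     = frame_coords P (\<lambda>r. \<Sum>p\<in>UNIV. \<Sum>q\<in>UNIV. (\<Sum>a\<in>UNIV. m a * P p a * P q a) * T p q r) c"
  unfolding frame_tensor_def frame_coords_def by (simp add: sum_3 algebra_simps)

lemma tensor_trace_frame_tensor:
  assumes "orthonormal_frame P"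
  shows "tensor_trace (frame_tensor P T) c = frame_coords P (tensor_trace T) c"
  using weighted_trace_frame_tensor[of "\<lambda>_. 1" P T c]
  by (simp add: tensor_trace_def[abs_def] orthonormal_frameD(2)[OF assms] sum_3)

text \<open>The general case is reduced to \<open>diagonal_tensor_ineq\<close> by writing \<open>T\<close> in an eigenframe of \<open>A\<close>.\<close>

lemma sigma2_cof_tensor_ineq:
  fixes A :: "real^3^3" and T :: "3 \<Rightarrow> 3 \<Rightarrow> 3 \<Rightarrow> real"
  assumes symA: "\<And>i j. A$i$j = A$j$i" and symT: "symmetric3 T"
    and pos1: "sigma1 A > 0" and pos2: "sigma2 A > 0"
    and constraint: "\<And>k. (\<Sum>i\<in>UNIV. \<Sum>j\<in>UNIV. sigma2_cof A i j * T i j k) = 0"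
  shows "(26/25) * (\<Sum>i\<in>UNIV. \<Sum>j\<in>UNIV. sigma2_cof A i j * tensor_trace T i * tensor_trace T j)
    \<le> sigma1 A * (tensor_norm2 T - (\<Sum>k\<in>UNIV. (tensor_trace T k)^2))"
proof -
  obtain P l where P: "orthonormal_frame P" and A: "\<And>i j. A$i$j = (\<Sum>a\<in>UNIV. l a * P i a * P j a)"
    using symmetric3_spectral[OF symA] by blast
  note spectral = sigmas_eigenframe[OF P A]
  define T' where "T' = frame_tensor P T"
  have "(\<Sum>i\<in>UNIV. (l 1 + l 2 + l 3 - l i) * T' i i k) = 0" for k
    using weighted_trace_frame_tensor[of "\<lambda>a. sigma1 A - l a" P T k] constraint
    unfolding T'_def spectral(1)[symmetric] spectral(3)[symmetric] by (simp add: frame_coords_def)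
  from diagonal_tensor_ineq[OF symmetric3_frame_tensor[OF symT] _ _ this[unfolded T'_def]]
  have "(26/25) * (\<Sum>k\<in>UNIV. (sigma1 A - l k) * (frame_coords P (tensor_trace T) k)^2)
      \<le> sigma1 A * (tensor_norm2 T - (\<Sum>k\<in>UNIV. (frame_coords P (tensor_trace T) k)^2))"
    using pos1 pos2 unfolding spectral(1,2)
    by (simp add: tensor_trace_frame_tensor[OF P] tensor_norm2_frame_tensor[OF P])
  moreover have "(\<Sum>i\<in>UNIV. \<Sum>j\<in>UNIV. sigma2_cof A i j * tensor_trace T i * tensor_trace T j)
      = (\<Sum>k\<in>UNIV. (sigma1 A - l k) * (frame_coords P (tensor_trace T) k)^2)"
    using sum_weighted_frame_coords[of "\<lambda>a. sigma1 A - l a" P "tensor_trace T" "tensor_trace T"]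
    by (simp add: spectral(3) power2_eq_square mult.assoc)
  ultimately show ?thesis unfolding frame_coords_sum_sq[OF P] by simp
qed

section \<open>Differentiating the equation\<close>

lemma pd3_commute:
  assumes "Ck 3 u"
  shows "pd k (pd i (pd j u)) = pd j (pd i (pd k u))"
proof -
  have "Ck 2 u" using Ck_le[OF assms] by simp
  moreover have "Ck 2 (pd i u)" for i using assms by (simp add: numeral_eq_Suc)
  ultimately show ?thesis by (metis pd_commute)
qed

lemma pd4_commute:
  assumes "Ck 4 u"
  shows "pd i (pd j (pd m (pd m u))) = pd m (pd m (pd i (pd j u)))"
proof -
  have "Ck 2 u" using Ck_le[OF assms] by simp
  moreover have "Ck 2 (pd j u)" "Ck 2 (pd m u)"
    using Ck_le[OF assms, of 3] by (simp_all add: numeral_eq_Suc)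
  moreover have "Ck 2 (pd m (pd j u))" using assms by (simp add: numeral_eq_Suc)
  ultimately show ?thesis by (metis pd_commute)
qed

lemma hess_symmetric: "Ck 2 u \<Longrightarrow> hess u x $ i $ j = hess u x $ j $ i"
  by (simp add: hess_def pd_commute)

definition D3 :: "(real^3 \<Rightarrow> real) \<Rightarrow> real^3 \<Rightarrow> 3 \<Rightarrow> 3 \<Rightarrow> 3 \<Rightarrow> real" where
  "D3 u y i j k = pd k (pd i (pd j u)) y"

lemma symmetric3_D3:
  assumes "Ck 3 u"
  shows "symmetric3 (D3 u x)"
proof -
  have "Ck 2 u" using Ck_le[OF assms] by simp
  then show ?thesis
    unfolding symmetric3_def D3_def using pd3_commute[OF assms] by (metis pd_commute)
qed

lemma lap_eq: "lap u y = (\<Sum>m\<in>UNIV. pd m (pd m u) y)"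
  by (simp add: lap_def sigma1_def hess_def)

lemma sigma2_cof_hess: "sigma2_cof (hess u y) i j = lap u y * (if i = j then 1 else 0) - pd i (pd j u) y"
  by (simp add: sigma2_cof_def lap_def hess_def)

lemma sigma2_explicit:
  "sigma2 A = A$1$1 * A$2$2 - A$1$2 * A$2$1 + A$1$1 * A$3$3 - A$1$3 * A$3$1 + A$2$2 * A$3$3 - A$2$3 * A$3$2"
  unfolding sigma2_def by (simp add: sum_3 less_bit1_def bit1.Rep_numeral bit1.Rep_1 algebra_simps)

lemma has_partial_pd_pd:
  assumes "Ck 3 u"
  shows "has_partial k (pd i (pd j u)) (pd k (pd i (pd j u)))"
  using assms by (simp add: numeral_eq_Suc has_partial_pd)

lemma has_partial_pd_pd_pd:
  assumes "Ck 4 u"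
  shows "has_partial l (pd k (pd i (pd j u))) (pd l (pd k (pd i (pd j u))))"
  using assms by (simp add: numeral_eq_Suc has_partial_pd)

lemma has_partial_lap:
  assumes "Ck 3 u"
  shows "has_partial k (lap u) (\<lambda>y. tensor_trace (D3 u y) k)"
  unfolding lap_eq[abs_def] tensor_trace_def D3_def by (intro has_partial_sum has_partial_pd_pd[OF assms])

lemma has_partial_trace_D3:
  assumes "Ck 4 u"
  shows "has_partial i (\<lambda>y. tensor_trace (D3 u y) j) (\<lambda>y. \<Sum>m\<in>UNIV. pd i (pd j (pd m (pd m u))) y)"
  unfolding tensor_trace_def D3_def by (intro has_partial_sum has_partial_pd_pd_pd[OF assms])

lemma has_partial_sigma2_hess:
  assumes "Ck 3 u"
  shows "has_partial k (\<lambda>y. sigma2 (hess u y))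
    (\<lambda>y. \<Sum>i\<in>UNIV. \<Sum>j\<in>UNIV. sigma2_cof (hess u y) i j * pd k (pd i (pd j u)) y)"
proof -
  have "Ck 2 u" using Ck_le[OF assms] by simp
  note sym = pd_commute[OF this]
  show ?thesis
    unfolding sigma2_explicit hess_def vec_lambda_beta
    by (rule has_partial_cong,
        (rule has_partial_add has_partial_diff has_partial_mult has_partial_pd_pd[OF assms])+)
      (simp add: sum_3 sigma2_cof_def sigma1_def sym[of 2 1] sym[of 3 1] sym[of 3 2] algebra_simps)
qed

lemma has_partial_sigma2_cof_hess:
  assumes "Ck 3 u"
  shows "has_partial l (\<lambda>y. sigma2_cof (hess u y) i j)
    (\<lambda>y. (\<Sum>m\<in>UNIV. pd l (pd m (pd m u)) y) * (if i = j then 1 else 0) - pd l (pd i (pd j u)) y)"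
  unfolding sigma2_cof_hess lap_eq
  by (rule has_partial_cong,
      (rule has_partial_diff has_partial_mult has_partial_sum has_partial_const has_partial_pd_pd[OF assms])+)
    simp

lemma sigma2_cof_D3_eq_0:
  assumes "Ck 3 u" and "\<And>y. sigma2 (hess u y) = c"
  shows "(\<Sum>i\<in>UNIV. \<Sum>j\<in>UNIV. sigma2_cof (hess u y) i j * D3 u y i j k) = 0"
proof -
  have "has_partial k (\<lambda>y. sigma2 (hess u y)) (\<lambda>y. 0)"
    using has_partial_const[of k c] assms(2) by simp
  with has_partial_sigma2_hess[OF assms(1)] show ?thesis unfolding D3_def by (rule has_partial_unique)
qed

lemma sigma2_cof_D4_eq:
  assumes "Ck 4 u" and "\<And>y. sigma2 (hess u y) = c"
  shows "(\<Sum>i\<in>UNIV. \<Sum>j\<in>UNIV. sigma2_cof (hess u y) i j * pd l (pd k (pd i (pd j u))) y)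
    = (\<Sum>i\<in>UNIV. \<Sum>j\<in>UNIV. (pd l (pd i (pd j u)) y
        - (\<Sum>m\<in>UNIV. pd l (pd m (pd m u)) y) * (if i = j then 1 else 0)) * pd k (pd i (pd j u)) y)"
proof -
  have u3: "Ck 3 u" using Ck_le[OF assms(1)] by simp
  have "has_partial l (\<lambda>y. \<Sum>i\<in>UNIV. \<Sum>j\<in>UNIV. sigma2_cof (hess u y) i j * pd k (pd i (pd j u)) y)
    (\<lambda>y. \<Sum>i\<in>UNIV. \<Sum>j\<in>UNIV.
       ((\<Sum>m\<in>UNIV. pd l (pd m (pd m u)) y) * (if i = j then 1 else 0) - pd l (pd i (pd j u)) y)
         * pd k (pd i (pd j u)) y + sigma2_cof (hess u y) i j * pd l (pd k (pd i (pd j u))) y)"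
    by (intro has_partial_sum has_partial_mult has_partial_sigma2_cof_hess[OF u3] has_partial_pd_pd_pd[OF assms(1)])
  moreover have "has_partial l (\<lambda>y. \<Sum>i\<in>UNIV. \<Sum>j\<in>UNIV. sigma2_cof (hess u y) i j * pd k (pd i (pd j u)) y)
    (\<lambda>y. 0)"
    using has_partial_const[of l 0] sigma2_cof_D3_eq_0[OF u3 assms(2)] by (simp add: D3_def)
  ultimately have "(\<Sum>i\<in>UNIV. \<Sum>j\<in>UNIV.
       ((\<Sum>m\<in>UNIV. pd l (pd m (pd m u)) y) * (if i = j then 1 else 0) - pd l (pd i (pd j u)) y)
         * pd k (pd i (pd j u)) y + sigma2_cof (hess u y) i j * pd l (pd k (pd i (pd j u))) y) = 0"
    by (rule has_partial_unique)
  then show ?thesis by (simp add: sum.distrib algebra_simps sum_subtractf)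
qed

lemma sigma2_cof_hess_lap:
  assumes "Ck 4 u" and "\<And>y. sigma2 (hess u y) = c"
  shows "(\<Sum>i\<in>UNIV. \<Sum>j\<in>UNIV. sigma2_cof (hess u x) i j * (\<Sum>m\<in>UNIV. pd i (pd j (pd m (pd m u))) x))
    = tensor_norm2 (D3 u x) - (\<Sum>k\<in>UNIV. (tensor_trace (D3 u x) k)^2)"
proof -
  define T where "T = D3 u x"
  have "(\<Sum>i\<in>UNIV. \<Sum>j\<in>UNIV. sigma2_cof (hess u x) i j * (\<Sum>m\<in>UNIV. pd i (pd j (pd m (pd m u))) x))
      = (\<Sum>m\<in>UNIV. \<Sum>i\<in>UNIV. \<Sum>j\<in>UNIV. sigma2_cof (hess u x) i j * pd m (pd m (pd i (pd j u))) x)"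
    unfolding sum_distrib_left by (subst pd4_commute[OF assms(1)]) (rule sum_rotate3[symmetric], simp_all)
  also have "\<dots> = (\<Sum>m\<in>UNIV. \<Sum>i\<in>UNIV. \<Sum>j\<in>UNIV. (T i j m - tensor_trace T m * (if i = j then 1 else 0)) * T i j m)"
    unfolding sigma2_cof_D4_eq[OF assms] T_def D3_def tensor_trace_def ..
  also have "\<dots> = (\<Sum>m\<in>UNIV. (\<Sum>i\<in>UNIV. \<Sum>j\<in>UNIV. (T i j m)^2) - (tensor_trace T m)^2)"
    unfolding tensor_trace_def by (simp add: sum_3 power2_eq_square algebra_simps)
  also have "\<dots> = (\<Sum>m\<in>UNIV. \<Sum>i\<in>UNIV. \<Sum>j\<in>UNIV. (T i j m)^2) - (\<Sum>k\<in>UNIV. (tensor_trace T k)^2)"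
    by (simp only: sum_subtractf)
  also have "(\<Sum>m\<in>UNIV. \<Sum>i\<in>UNIV. \<Sum>j\<in>UNIV. (T i j m)^2) = tensor_norm2 T"
    unfolding tensor_norm2_def by (rule sum_rotate3) simp_all
  finally show ?thesis unfolding T_def .
qed

lemma pd_ln:
  assumes "\<And>x. f x > 0" and "has_partial j f fj"
  shows "pd j (\<lambda>x. ln (f x)) = (\<lambda>x. fj x / f x)"
  by (rule pd_eqI, rule has_partial_ln[OF assms])

lemma pd_pd_ln:
  assumes pos: "\<And>x. f x > 0" and fj: "has_partial j f fj" and fi: "has_partial i f fi"
    and fij: "has_partial i fj fij"
  shows "pd i (pd j (\<lambda>x. ln (f x))) x = fij x / f x - fi x * fj x / (f x)^2"
proof -
  have "f x \<noteq> 0" for x using pos[of x] by simp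
  from has_partial_divide[OF this fij fi]
  have "pd i (pd j (\<lambda>x. ln (f x))) = (\<lambda>x. (fij x * f x - fj x * fi x) / (f x * f x))"
    unfolding pd_ln[OF pos fj] by (rule pd_eqI)
  then show ?thesis using pos[of x] by (simp add: field_simps power2_eq_square)
qed

lemma sigma2_cof_grad_ln_lap:
  assumes "Ck 3 u" and pos: "\<And>y. lap u y > 0"
  shows "(\<Sum>i\<in>UNIV. \<Sum>j\<in>UNIV. sigma2_cof (hess u x) i j * pd i (\<lambda>y. ln (lap u y)) x
      * pd j (\<lambda>y. ln (lap u y)) x)
    = (\<Sum>i\<in>UNIV. \<Sum>j\<in>UNIV. sigma2_cof (hess u x) i j * tensor_trace (D3 u x) i
      * tensor_trace (D3 u x) j) / (lap u x)^2"
  unfolding pd_ln[OF pos has_partial_lap[OF assms(1)]]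
  by (simp add: sum_divide_distrib power2_eq_square mult_ac)

lemma sigma2_cof_hess_ln_lap:
  assumes "Ck 4 u" and pos: "\<And>y. lap u y > 0" and "\<And>y. sigma2 (hess u y) = c"
  shows "(\<Sum>i\<in>UNIV. \<Sum>j\<in>UNIV. sigma2_cof (hess u x) i j * pd i (pd j (\<lambda>y. ln (lap u y))) x)
    = (tensor_norm2 (D3 u x) - (\<Sum>k\<in>UNIV. (tensor_trace (D3 u x) k)^2)) / lap u x
      - (\<Sum>i\<in>UNIV. \<Sum>j\<in>UNIV. sigma2_cof (hess u x) i j * tensor_trace (D3 u x) i
          * tensor_trace (D3 u x) j) / (lap u x)^2"
proof -
  have u3: "Ck 3 u" using Ck_le[OF assms(1)] by simp
  define a where "a i j = (\<Sum>m\<in>UNIV. pd i (pd j (pd m (pd m u))) x)" for i j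
  have "pd i (pd j (\<lambda>y. ln (lap u y))) x
      = a i j / lap u x - tensor_trace (D3 u x) i * tensor_trace (D3 u x) j / (lap u x)^2" for i j
    unfolding pd_pd_ln[OF pos has_partial_lap[OF u3] has_partial_lap[OF u3] has_partial_trace_D3[OF assms(1)]]
    by (simp add: a_def)
  then have "(\<Sum>i\<in>UNIV. \<Sum>j\<in>UNIV. sigma2_cof (hess u x) i j * pd i (pd j (\<lambda>y. ln (lap u y))) x)
      = (\<Sum>i\<in>UNIV. \<Sum>j\<in>UNIV. sigma2_cof (hess u x) i j * a i j) / lap u x
        - (\<Sum>i\<in>UNIV. \<Sum>j\<in>UNIV. sigma2_cof (hess u x) i j * tensor_trace (D3 u x) i
            * tensor_trace (D3 u x) j) / (lap u x)^2"
    by (simp add: sum_subtractf sum_divide_distrib right_diff_distrib mult_ac)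
  then show ?thesis
    unfolding a_def sigma2_cof_hess_lap[OF assms(1,3)] .
qed

theorem lemma3p1:
  fixes u :: "real^3 \<Rightarrow> real"
  assumes "Ck 4 u"
    and "two_convex u"
    and "\<forall>x. sigma2 (hess u x) = 1"
  shows "\<forall>x. (\<Sum>i\<in>UNIV. \<Sum>j\<in>UNIV.
            sigma2_cof (hess u x) i j * pd i (pd j (\<lambda>y. ln (lap u y))) x)
         \<ge> (1/25) * (\<Sum>i\<in>UNIV. \<Sum>j\<in>UNIV.
            sigma2_cof (hess u x) i j * pd i (\<lambda>y. ln (lap u y)) x
              * pd j (\<lambda>y. ln (lap u y)) x)"
proof
  fix x
  have u2: "Ck 2 u" and u3: "Ck 3 u" using Ck_le[OF assms(1)] by simp_all
  have pos: "sigma1 (hess u y) > 0" "sigma2 (hess u y) > 0" for y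
    using assms(2) unfolding two_convex_def by auto
  have lap_pos: "lap u y > 0" for y unfolding lap_def by (rule pos(1))
  define F where "F = lap u x"
  define C where "C = (\<Sum>i\<in>UNIV. \<Sum>j\<in>UNIV.
    sigma2_cof (hess u x) i j * tensor_trace (D3 u x) i * tensor_trace (D3 u x) j)"
  define Q where "Q = tensor_norm2 (D3 u x) - (\<Sum>k\<in>UNIV. (tensor_trace (D3 u x) k)^2)"
  have "(26/25) * C \<le> F * Q"
    unfolding C_def Q_def F_def lap_def
    by (rule sigma2_cof_tensor_ineq[OF hess_symmetric[OF u2] symmetric3_D3[OF u3] pos
          sigma2_cof_D3_eq_0[OF u3 assms(3)[rule_format]]])
  then have "C / 25 / F^2 \<le> (F * Q - C) / F^2" by (intro divide_right_mono) simp_all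
  moreover have "F > 0" unfolding F_def by (rule lap_pos)
  ultimately show "(1/25) * (\<Sum>i\<in>UNIV. \<Sum>j\<in>UNIV. sigma2_cof (hess u x) i j
        * pd i (\<lambda>y. ln (lap u y)) x * pd j (\<lambda>y. ln (lap u y)) x)
      \<le> (\<Sum>i\<in>UNIV. \<Sum>j\<in>UNIV. sigma2_cof (hess u x) i j * pd i (pd j (\<lambda>y. ln (lap u y))) x)"
    unfolding sigma2_cof_grad_ln_lap[OF u3 lap_pos]
      sigma2_cof_hess_ln_lap[OF assms(1) lap_pos assms(3)[rule_format]]
      C_def[symmetric] Q_def[symmetric] F_def[symmetric]
    by (simp add: power2_eq_square diff_divide_distrib)
qed

end
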